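(* Let $\mathcal{P} \subseteq \{2,3,4,\dots\}$ be nonempty and suppose $\rho(\mathcal{P})$ (defined in the context) exists. Then for every integer $n \geq 1$, $$H(n,\mathcal{P}) \leq n^{\rho(\mathcal{P})}.$$
   Context: For $\mathcal{P} \subseteq \{2,3,\dots\}$, $H(n,\mathcal{P})$ denotes the number of ordered factorizations of $n$ into factors that all belong to $\mathcal{P}$: $H(1,\mathcal{P})=1$ and, for $n\ge 2$, $H(n,\mathcal{P})=\sum_{k\ge1} \#\{(d_1,\dots,d_k): d_1\cdots d_k=n,\ d_i\in\mathcal{P}\}$. Equivalently, $H(n,\mathcal{P})=\sum_{d\mid n,\ d\in\mathcal{P}} H(n/d,\mathcal{P})$ for $n\ge2$. Let $\zeta_\mathcal{P}(s)=\sum_{m\in\mathcal{P}} m^{-s}$ with abscissa of convergence $\sigma_\mathcal{P}$ ($\sigma_\mathcal{P}=-\infty$ if $\mathcal{P}$ is finite). For real $s\ge 0$ in the region of convergence, $\zeta_\mathcal{P}(s)$ is strictly decreasing and tends to $0$ as $s\to\infty$; $\rho(\mathcal{P})$ denotes the unique real $s\geq 0$ (with $s>\sigma_\mathcal{P}$, or at which the series converges) such that $\zeta_\mathcal{P}(s)=1$. *)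

theory Defs
  imports "HOL-Analysis.Analysis"
begin

definition H :: "nat \<Rightarrow> nat set \<Rightarrow> nat" where
  "H n P = card {ds :: nat list. set ds \<subseteq> P \<and> prod_list ds = n}"

definition zetaP :: "nat set \<Rightarrow> real \<Rightarrow> real" where
  "zetaP P s = (\<Sum>\<^sub>\<infinity>m\<in>P. real m powr (-s))"

definition rho_exists :: "nat set \<Rightarrow> bool" where
  "rho_exists P \<longleftrightarrow> (\<exists>s\<ge>0. (\<lambda>m. real m powr (-s)) summable_on P \<and> zetaP P s = 1)"

definition rho :: "nat set \<Rightarrow> real" where
  "rho P = (THE s. s \<ge> 0 \<and> (\<lambda>m. real m powr (-s)) summable_on P \<and> zetaP P s = 1)"

end

theory Submission
  imports Defs
begin

text \<open>Peeling off the first factor gives the recurrence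
  \<open>H n P = (\<Sum>d\<in>P, d dvd n. H (n div d) P)\<close> for \<open>n \<ge> 2\<close>. If \<open>\<zeta>\<^sub>P(r) = 1\<close>, strong
  induction on \<open>n\<close> bounds the right-hand side by
  \<open>\<Sum>d\<in>P, d dvd n. (n/d)\<^sup>r \<le> n\<^sup>r \<zeta>\<^sub>P(r) = n\<^sup>r\<close>. Since \<open>\<zeta>\<^sub>P\<close> is strictly decreasing,
  such an \<open>r\<close> is unique, so it is \<open>\<rho>(P)\<close>.\<close>

definition factorizations :: "nat \<Rightarrow> nat set \<Rightarrow> nat list set" where
  "factorizations n P = {ds. set ds \<subseteq> P \<and> prod_list ds = n}"

lemma H_eq_card_factorizations: "H n P = card (factorizations n P)"
  by (simp add: H_def factorizations_def)

lemma two_power_length_le_prod_list: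
  fixes ds :: "nat list"
  assumes "set ds \<subseteq> {2..}"
  shows "2 ^ length ds \<le> prod_list ds"
  using assms by (induction ds) (auto intro: mult_mono)

lemma finite_factorizations:
  assumes "P \<subseteq> {2..}" and "n \<ge> 1"
  shows "finite (factorizations n P)"
proof -
  have "factorizations n P \<subseteq> {ds. set ds \<subseteq> {..n} \<and> length ds \<le> n}"
  proof
    fix ds assume "ds \<in> factorizations n P"
    then have ds: "set ds \<subseteq> P" "prod_list ds = n" by (auto simp: factorizations_def)
    have "x \<le> n" if "x \<in> set ds" for x
      using prod_list_dvd[OF that] ds(2) assms(2) by (auto intro: dvd_imp_le)
    moreover have "2 ^ length ds \<le> n"
      using two_power_length_le_prod_list[of ds] ds assms(1) by blast
    then have "length ds \<le> n"
      using less_exp[of "length ds"] by linarith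
    ultimately show "ds \<in> {ds. set ds \<subseteq> {..n} \<and> length ds \<le> n}" by auto
  qed
  then show ?thesis using finite_lists_length_le[of "{..n}" n] finite_subset by blast
qed

lemma factorizations_1:
  assumes "P \<subseteq> {2..}"
  shows "factorizations 1 P = {[]}"
proof -
  have "ds = []" if "set ds \<subseteq> P" "prod_list ds = 1" for ds :: "nat list"
  proof (cases ds)
    case (Cons d ds')
    then have "d dvd 1" "d \<ge> 2" using that prod_list_dvd[of d ds] assms by auto
    then show ?thesis by simp
  qed
  then show ?thesis by (auto simp: factorizations_def)
qed

lemma factorizations_eq_UN_Cons:
  assumes "0 \<notin> P" and "n \<noteq> 1"
  shows "factorizations n P = (\<Union>d\<in>{d\<in>P. d dvd n}. Cons d ` factorizations (n div d) P)"
proof (intro equalityI subsetI)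
  fix ds assume "ds \<in> factorizations n P"
  then have ds: "set ds \<subseteq> P" "prod_list ds = n" by (auto simp: factorizations_def)
  then obtain d ds' where d: "ds = d # ds'" using assms(2) by (cases ds) auto
  then have d_in: "d \<in> P" "d dvd n" "set ds' \<subseteq> P" using ds by auto
  with assms(1) have "d \<noteq> 0" by metis
  then have "prod_list ds' = n div d" using ds(2) d by auto
  with d_in show "ds \<in> (\<Union>d\<in>{d\<in>P. d dvd n}. Cons d ` factorizations (n div d) P)"
    using d by (auto simp: factorizations_def)
qed (auto simp: factorizations_def)

lemma H_recurrence:
  assumes "P \<subseteq> {2..}" and "n \<ge> 2"
  shows "H n P = (\<Sum>d\<in>{d\<in>P. d dvd n}. H (n div d) P)"
proof -
  let ?D = "{d\<in>P. d dvd n}"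
  have "finite ?D" using assms(2) by (intro finite_subset[OF _ finite_divisors_nat]) auto
  moreover have "finite (Cons d ` factorizations (n div d) P)" if "d \<in> ?D" for d
    using that assms by (intro finite_imageI finite_factorizations)
      (auto simp: div_greater_zero_iff dvd_imp_le)
  ultimately have "card (\<Union>d\<in>?D. Cons d ` factorizations (n div d) P)
      = (\<Sum>d\<in>?D. card (Cons d ` factorizations (n div d) P))"
    by (intro card_UN_disjoint) auto
  moreover have "factorizations n P = (\<Union>d\<in>?D. Cons d ` factorizations (n div d) P)"
    using assms by (intro factorizations_eq_UN_Cons) auto
  ultimately show ?thesis by (simp add: H_eq_card_factorizations card_image)
qed

lemma H_le_powr:
  assumes "P \<subseteq> {2..}" and "(\<lambda>m. real m powr (-r)) summable_on P" and "zetaP P r \<le> 1"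
    and "n \<ge> 1"
  shows "real (H n P) \<le> real n powr r"
  using assms(4)
proof (induction n rule: less_induct)
  case (less n)
  show ?case
  proof (cases "n = 1")
    case True
    then show ?thesis using factorizations_1[OF assms(1)] by (simp add: H_eq_card_factorizations)
  next
    case False
    with less.prems have n: "n \<ge> 2" by simp
    define D where "D = {d\<in>P. d dvd n}"
    have "finite D" unfolding D_def using n
      by (intro finite_subset[OF _ finite_divisors_nat]) auto
    have D: "d \<ge> 2" "d dvd n" if "d \<in> D" for d using that assms(1) by (auto simp: D_def)
    have "real (H n P) = (\<Sum>d\<in>D. real (H (n div d) P))"
      using H_recurrence[OF assms(1) n] by (simp add: D_def)
    also have "\<dots> \<le> (\<Sum>d\<in>D. real (n div d) powr r)"
    proof (intro sum_mono less.IH)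
      fix d assume "d \<in> D"
      with D[of d] n show "n div d < n" "1 \<le> n div d"
        by (auto simp: div_greater_zero_iff dvd_imp_le)
    qed
    also have "\<dots> = real n powr r * (\<Sum>d\<in>D. real d powr (-r))"
      unfolding sum_distrib_left
      by (intro sum.cong refl) (simp add: D real_of_nat_div powr_divide powr_minus_divide)
    also have "\<dots> \<le> real n powr r * zetaP P r"
      unfolding zetaP_def using assms(2) \<open>finite D\<close>
      by (intro mult_left_mono finite_sum_le_infsum) (auto simp: D_def)
    also have "\<dots> \<le> real n powr r"
      using assms(3) by (simp add: mult_left_le)
    finally show ?thesis .
  qed
qed

lemma zetaP_strict_antimono:
  assumes "P \<subseteq> {2..}" and "P \<noteq> {}" and "s < t"
    and "(\<lambda>m. real m powr (-s)) summable_on P" and "(\<lambda>m. real m powr (-t)) summable_on P"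
  shows "zetaP P t < zetaP P s"
proof -
  obtain m where "m \<in> P" using assms(2) by auto
  have "real k powr (-t) < real k powr (-s)" if "k \<in> P" for k
    using that assms(1,3) by (intro powr_less_mono) auto
  then show ?thesis unfolding zetaP_def
    using \<open>m \<in> P\<close> assms(4,5) by (intro has_sum_strict_mono[OF has_sum_infsum has_sum_infsum]) force+
qed

lemma rho_eqI:
  assumes "P \<subseteq> {2..}" and "P \<noteq> {}"
    and "s \<ge> 0" and "(\<lambda>m. real m powr (-s)) summable_on P" and "zetaP P s = 1"
  shows "rho P = s"
  unfolding rho_def
proof (rule the_equality)
  fix t assume t: "t \<ge> 0 \<and> (\<lambda>m. real m powr (-t)) summable_on P \<and> zetaP P t = 1"
  show "t = s"
    using zetaP_strict_antimono[OF assms(1,2), of s t] zetaP_strict_antimono[OF assms(1,2), of t s]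
      assms(4,5) t by (cases s t rule: linorder_cases) auto
qed (use assms in auto)

theorem lemma2p1:
  fixes P :: "nat set" and n :: nat
  assumes "P \<subseteq> {2..}" and "P \<noteq> {}" and "rho_exists P" and "n \<ge> 1"
  shows "real (H n P) \<le> real n powr rho P"
proof -
  obtain s where s: "s \<ge> 0" "(\<lambda>m. real m powr (-s)) summable_on P" "zetaP P s = 1"
    using assms(3) unfolding rho_exists_def by blast
  then have "rho P = s" using rho_eqI[OF assms(1,2)] by blast
  then show ?thesis using H_le_powr[OF assms(1) s(2)] s(3) assms(4) by simp
qed

end
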